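(* Let $c\in[0,1)$, $b(c)=\tfrac12-c$, $f_c(x)=\log|\cos\pi(x+c)|$, and suppose $\chi_-(f_c,T(b(c)))>-\infty$. Then there is a constant $K>0$ such that for every $x\in\mathbb T$, either $T^n(x)=b(c)$ for some $n\ge0$, or $\chi_+(f_c,x)>-K$. Consequently $\alpha(c):=\inf_{\mu\in\mathcal M_T}\int f_c\,d\mu\ge -K$.
   Context: $\mathbb T=\mathbb R/\mathbb Z$, $Tx=2x\bmod1$, $\mathcal M_T$ the set of $T$-invariant Borel probability measures. $\chi_-(f_c,x)=\liminf_{n\to\infty}\frac1n\sum_{i=0}^{n-1}f_c(T^ix)$ and $\chi_+(f_c,x)=\limsup_{n\to\infty}\frac1n\sum_{i=0}^{n-1}f_c(T^ix)$. Convention $\log0=-\infty$. *)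

theory Defs
  imports "HOL-Probability.Probability"
begin

text \<open>The circle R/Z is represented by the fundamental domain [0,1).\<close>

definition doubling :: "real \<Rightarrow> real" where
  "doubling x = frac (2 * x)"

definition bpt :: "real \<Rightarrow> real" where
  "bpt c = frac (1/2 - c)"

definition fc :: "real \<Rightarrow> real \<Rightarrow> ereal" where
  "fc c x = (if cos (pi * (x + c)) = 0 then -\<infinity> else ereal (ln \<bar>cos (pi * (x + c))\<bar>))"

definition birkhoff_avg :: "real \<Rightarrow> real \<Rightarrow> nat \<Rightarrow> ereal" where
  "birkhoff_avg c x n = ereal (1 / real n) * (\<Sum>i<n. fc c ((doubling ^^ i) x))"

definition chi_minus :: "real \<Rightarrow> real \<Rightarrow> ereal" where
  "chi_minus c x = liminf (birkhoff_avg c x)"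

definition chi_plus :: "real \<Rightarrow> real \<Rightarrow> ereal" where
  "chi_plus c x = limsup (birkhoff_avg c x)"

definition invariant_measures :: "real measure set" where
  "invariant_measures = {M. sets M = sets (restrict_space borel {0..<1}) \<and> prob_space M
      \<and> doubling \<in> M \<rightarrow>\<^sub>M M \<and> distr M M doubling = M}"

text \<open>Integral of the nonpositive function f_c (value in [-infinity,0]).\<close>
definition int_fc :: "real \<Rightarrow> real measure \<Rightarrow> ereal" where
  "int_fc c M = - enn2ereal (\<integral>\<^sup>+ x. e2ennreal (- fc c x) \<partial>M)"

definition alpha :: "real \<Rightarrow> ereal" where
  "alpha c = (INF M\<in>invariant_measures. int_fc c M)"

end

theory Submission
  imports Defs
begin

text \<open>Write \<open>b = b(c)\<close>, so that \<open>f\<^sub>c(y) = log |sin \<pi>(y - b)|\<close> is singular only at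
  \<open>b\<close>. The hypothesis says that the orbit of \<open>T b\<close> never returns to \<open>b\<close> and that the
  Birkhoff sums of \<open>-f\<^sub>c\<close> along it grow at most like \<open>A n\<close>. For \<open>y = b + t\<close> the orbit
  of \<open>y\<close> shadows that of \<open>b\<close>, with \<open>|f\<^sub>c|\<close> larger by at most \<open>log 2\<close>, until
  \<open>2\<^sup>k |t|\<close> becomes comparable to the distance from \<open>T\<^sup>k b\<close> to \<open>b\<close>; that distance is
  at least \<open>exp (-A k)\<close>, which bounds \<open>-log |t|\<close>, hence \<open>-f\<^sub>c(y)\<close>, by \<open>O(k)\<close>. So every
  orbit splits into blocks on which the Birkhoff sum of \<open>-f\<^sub>c\<close> is at most \<open>K\<close> times the
  block length. This gives \<open>\<chi>\<^sub>+ \<ge> -K\<close> on orbits avoiding \<open>b\<close>; for an invariant measure,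
  the Birkhoff sums of the truncation \<open>min (-f\<^sub>c) M\<close> are at most \<open>K n + 3 M\<close> along every
  orbit, so its integral is at most \<open>K\<close>, and monotone convergence gives \<open>\<alpha>(c) \<ge> -K\<close>.\<close>

section \<open>Birkhoff sums\<close>

lemma birkhoff_sum_add:
  "(\<Sum>i<m + k. h ((T ^^ i) y)) = (\<Sum>i<m. h ((T ^^ i) y)) + (\<Sum>i<k. h ((T ^^ i) ((T ^^ m) y)))"
  by (induction k) (simp_all add: funpow_add add_ac)

lemma birkhoff_sum_Suc:
  "(\<Sum>i<Suc n. h ((T ^^ i) y)) = h y + (\<Sum>i<n. h ((T ^^ i) (T y)))"
  by (simp only: sum.lessThan_Suc_shift funpow_0 funpow_Suc_right comp_apply)

lemma birkhoff_sum_le_by_blocks: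
  fixes T :: "'a \<Rightarrow> 'a" and h :: "'a \<Rightarrow> real"
  assumes "0 \<le> M"
    and block: "\<And>y. P y \<Longrightarrow> \<exists>m\<ge>1. (\<Sum>i<m. h ((T ^^ i) y)) \<le> K * real m \<and>
                  (\<forall>r\<le>m. (\<Sum>i<r. h ((T ^^ i) y)) \<le> K * real r + M)"
    and "\<And>i. i < n \<Longrightarrow> P ((T ^^ i) y)"
  shows "(\<Sum>i<n. h ((T ^^ i) y)) \<le> K * real n + M"
  using assms(3)
proof (induction n arbitrary: y rule: less_induct)
  case (less n)
  show ?case
  proof (cases "n = 0")
    case True
    with \<open>0 \<le> M\<close> show ?thesis by simp
  next
    case False
    then obtain m where "1 \<le> m" and full: "(\<Sum>i<m. h ((T ^^ i) y)) \<le> K * real m"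
      and partial: "\<And>r. r \<le> m \<Longrightarrow> (\<Sum>i<r. h ((T ^^ i) y)) \<le> K * real r + M"
      using block less.prems[of 0] by auto
    show ?thesis
    proof (cases "n \<le> m")
      case True
      then show ?thesis by (rule partial)
    next
      case False
      define k where "k = n - m"
      have n: "n = m + k" "k < n" using False \<open>1 \<le> m\<close> by (simp_all add: k_def)
      have "(\<Sum>i<k. h ((T ^^ i) ((T ^^ m) y))) \<le> K * real k + M"
      proof (rule less.IH[OF \<open>k < n\<close>])
        fix i assume "i < k"
        then show "P ((T ^^ i) ((T ^^ m) y))"
          using less.prems[of "i + m"] n by (simp add: funpow_add)
      qed
      with full show ?thesis unfolding n(1) birkhoff_sum_add by (simp add: algebra_simps)
    qed
  qed
qed

lemma frequently_birkhoff_sum_le_by_blocks: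
  fixes T :: "'a \<Rightarrow> 'a" and h :: "'a \<Rightarrow> real"
  assumes block: "\<And>y. P y \<Longrightarrow> \<exists>m\<ge>1. (\<Sum>i<m. h ((T ^^ i) y)) \<le> K * real m"
    and orbit: "\<And>i. P ((T ^^ i) x)"
  shows "\<exists>\<^sub>F n in sequentially. (\<Sum>i<n. h ((T ^^ i) x)) \<le> K * real n"
  unfolding frequently_sequentially
proof
  fix N
  show "\<exists>n\<ge>N. (\<Sum>i<n. h ((T ^^ i) x)) \<le> K * real n"
  proof (induction N)
    case 0
    show ?case by (intro exI[of _ 0]) simp
  next
    case (Suc N)
    then obtain n where "N \<le> n" and le: "(\<Sum>i<n. h ((T ^^ i) x)) \<le> K * real n" by blast
    obtain m where "1 \<le> m" and "(\<Sum>i<m. h ((T ^^ i) ((T ^^ n) x))) \<le> K * real m"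
      using block[OF orbit] by blast
    with le have "(\<Sum>i<n + m. h ((T ^^ i) x)) \<le> K * real (n + m)"
      unfolding birkhoff_sum_add of_nat_add distrib_left by linarith
    with \<open>N \<le> n\<close> \<open>1 \<le> m\<close> show ?case by (intro exI[of _ "n + m"]) auto
  qed
qed

lemma le_Limsup_if_frequently:
  fixes f :: "_ \<Rightarrow> 'a :: complete_linorder"
  assumes "\<exists>\<^sub>F x in F. l \<le> f x"
  shows "l \<le> Limsup F f"
proof (rule ccontr)
  assume "\<not> l \<le> Limsup F f"
  then have "\<forall>\<^sub>F x in F. f x < l" by (intro Limsup_lessD) simp
  with assms have "\<exists>\<^sub>F x in F. False"
    by (rule frequently_eventually_frequently[THEN frequently_elim1]) auto
  then show False by simp
qed

lemma nn_integral_funpow_invariant: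
  assumes T: "T \<in> \<mu> \<rightarrow>\<^sub>M \<mu>" and inv: "distr \<mu> \<mu> T = \<mu>"
    and F: "F \<in> borel_measurable \<mu>"
  shows "(\<integral>\<^sup>+y. F ((T ^^ i) y) \<partial>\<mu>) = (\<integral>\<^sup>+y. F y \<partial>\<mu>)"
proof (induction i)
  case (Suc i)
  have "(\<lambda>y. F ((T ^^ i) y)) \<in> borel_measurable \<mu>"
    using measurable_compose[OF measurable_compose_n[OF T] F] by (simp add: comp_def)
  then have "(\<integral>\<^sup>+y. F ((T ^^ i) (T y)) \<partial>\<mu>) = (\<integral>\<^sup>+y. F ((T ^^ i) y) \<partial>distr \<mu> \<mu> T)"
    using nn_integral_distr[OF T] by simp
  with Suc inv show ?case by (simp only: funpow_Suc_right comp_apply)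
qed simp

lemma nn_integral_le_if_birkhoff_sum_le:
  fixes h :: "'a \<Rightarrow> real"
  assumes "prob_space \<mu>" and T: "T \<in> \<mu> \<rightarrow>\<^sub>M \<mu>" and inv: "distr \<mu> \<mu> T = \<mu>"
    and h: "h \<in> borel_measurable \<mu>" and nonneg: "\<And>y. 0 \<le> h y"
    and bound: "\<And>n y. (\<Sum>i<n. h ((T ^^ i) y)) \<le> a * real n + b"
  shows "(\<integral>\<^sup>+y. ennreal (h y) \<partial>\<mu>) \<le> ennreal a"
proof -
  have multiple: "of_nat n * (\<integral>\<^sup>+y. ennreal (h y) \<partial>\<mu>) \<le> ennreal (a * real n + b)" for n
  proof -
    have "of_nat n * (\<integral>\<^sup>+y. ennreal (h y) \<partial>\<mu>) = (\<Sum>i<n. \<integral>\<^sup>+y. ennreal (h ((T ^^ i) y)) \<partial>\<mu>)"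
      using nn_integral_funpow_invariant[OF T inv, of "\<lambda>y. ennreal (h y)"] h by simp
    also have "\<dots> = (\<integral>\<^sup>+y. (\<Sum>i<n. ennreal (h ((T ^^ i) y))) \<partial>\<mu>)"
      using measurable_compose[OF measurable_compose_n[OF T] h]
      by (intro nn_integral_sum[symmetric]) (simp add: comp_def)
    also have "\<dots> \<le> (\<integral>\<^sup>+y. ennreal (a * real n + b) \<partial>\<mu>)"
      by (intro nn_integral_mono) (simp add: sum_ennreal nonneg bound ennreal_leI)
    also have "\<dots> = ennreal (a * real n + b)"
      using prob_space.emeasure_space_1[OF \<open>prob_space \<mu>\<close>] by simp
    finally show ?thesis .
  qed
  from multiple[of 1] obtain X where X: "(\<integral>\<^sup>+y. ennreal (h y) \<partial>\<mu>) = ennreal X" "0 \<le> X"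
    by (cases "\<integral>\<^sup>+y. ennreal (h y) \<partial>\<mu>" rule: ennreal_cases) (auto simp: top_unique)
  have multiple_real: "real n * X \<le> a * real n + b" for n
  proof -
    have "0 \<le> (\<Sum>i<n. h ((T ^^ i) undefined))" by (simp add: sum_nonneg nonneg)
    also note bound
    finally have "0 \<le> a * real n + b" .
    moreover have "ennreal (real n * X) \<le> ennreal (a * real n + b)"
      using multiple[of n] X by (simp add: ennreal_mult ennreal_of_nat_eq_real_of_nat)
    ultimately show ?thesis by (simp add: ennreal_le_iff)
  qed
  have "X \<le> a"
  proof (rule ccontr)
    assume "\<not> X \<le> a"
    then have "0 < X - a" by simp
    obtain n where "b / (X - a) < real n" using reals_Archimedean2 by blast
    with \<open>0 < X - a\<close> have "b < real n * (X - a)" by (simp add: pos_divide_less_eq mult.commute)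
    with multiple_real[of n] show False by (simp add: algebra_simps)
  qed
  then show ?thesis unfolding X(1) by (rule ennreal_leI)
qed

lemma sum_le_linear_if_limsup_average_finite:
  fixes g :: "nat \<Rightarrow> real"
  assumes nonneg: "\<And>i. 0 \<le> g i" and "limsup (\<lambda>n. ereal ((\<Sum>i<n. g i) / real n)) < \<infinity>"
  obtains A where "\<forall>n. (\<Sum>i<n. g i) \<le> A * real n"
proof -
  obtain B where "limsup (\<lambda>n. ereal ((\<Sum>i<n. g i) / real n)) < ereal B"
    using ereal_dense2[OF assms(2)] by blast
  then have "\<forall>\<^sub>F n in sequentially. ereal ((\<Sum>i<n. g i) / real n) < ereal B"
    by (rule Limsup_lessD)
  then obtain N where N: "\<And>n. N \<le> n \<Longrightarrow> (\<Sum>i<n. g i) / real n < B"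
    by (auto simp: eventually_sequentially)
  define A where "A = max B 0 + (\<Sum>i<N. g i)"
  have A: "0 \<le> A" "B \<le> A" "(\<Sum>i<N. g i) \<le> A"
    using sum_nonneg[of "{..<N}" g] nonneg by (auto simp: A_def)
  have "(\<Sum>i<n. g i) \<le> A * real n" if "n \<noteq> 0" for n
  proof (cases "N \<le> n")
    case True
    then have "(\<Sum>i<n. g i) \<le> B * real n"
      using N[OF True] that by (simp add: divide_less_eq less_imp_le)
    also have "\<dots> \<le> A * real n" using A(2) by (rule mult_right_mono) simp
    finally show ?thesis .
  next
    case False
    then have "(\<Sum>i<n. g i) \<le> (\<Sum>i<N. g i)"
      using nonneg by (intro sum_mono2) auto
    also have "\<dots> \<le> A" by (rule A(3))
    also have "\<dots> \<le> A * real n" using A(1) that by (simp add: mult_le_cancel_left1)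
    finally show ?thesis .
  qed
  then have "(\<Sum>i<n. g i) \<le> A * real n" for n by (cases "n = 0") auto
  then show ?thesis using that by blast
qed

lemma ex_least_le_geometric:
  fixes d :: "nat \<Rightarrow> real"
  assumes "0 < r" and "\<And>j. d j \<le> C"
  obtains m where "d m \<le> 2 ^ m * r" "\<And>i. i < m \<Longrightarrow> 2 ^ i * r < d i"
proof -
  obtain n where "C / r < 2 ^ n" using real_arch_pow[of 2 "C / r"] by auto
  with \<open>0 < r\<close> have "C < 2 ^ n * r" by (simp add: pos_divide_less_eq)
  with assms(2)[of n] have "d n \<le> 2 ^ n * r" by simp
  then obtain m where "d m \<le> 2 ^ m * r" "\<forall>i<m. \<not> d i \<le> 2 ^ i * r"
    using ex_least_nat_le[of "\<lambda>j. d j \<le> 2 ^ j * r"] by blast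
  with that show ?thesis by (auto simp: not_le)
qed

lemma abs_cos_le_abs_cos_add_abs_sin:
  fixes x s :: real
  shows "\<bar>cos x\<bar> \<le> \<bar>cos (x + s)\<bar> + \<bar>sin s\<bar>"
proof -
  have "cos x = cos (x + s) * cos s + sin (x + s) * sin s"
    using cos_diff[of "x + s" s] by simp
  then have "\<bar>cos x\<bar> \<le> \<bar>cos (x + s)\<bar> * \<bar>cos s\<bar> + \<bar>sin (x + s)\<bar> * \<bar>sin s\<bar>"
    by (metis abs_mult abs_triangle_ineq)
  also have "\<dots> \<le> \<bar>cos (x + s)\<bar> + \<bar>sin s\<bar>"
    by (intro add_mono mult_right_le_one_le mult_left_le_one_le abs_cos_le_one abs_sin_le_one abs_ge_zero)
  finally show ?thesis .
qed

lemma abs_cos_add_int_times_pi: "\<bar>cos (x + pi * of_int k)\<bar> = \<bar>cos x\<bar>"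
proof -
  have "sin (pi * of_int k) = 0" "sin (- (pi * of_int k)) = 0"
    using sin_times_pi_eq_0[of "of_int k"] by (simp_all add: mult.commute)
  then show ?thesis
    using abs_cos_le_abs_cos_add_abs_sin[of x "pi * of_int k"]
      abs_cos_le_abs_cos_add_abs_sin[of "x + pi * of_int k" "- (pi * of_int k)"]
    by simp
qed

lemma third_le_sin:
  fixes x :: real
  assumes "0 \<le> x" "x \<le> 2"
  shows "x / 3 \<le> sin x"
proof -
  have "\<bar>sin x - (\<Sum>m<3. sin_coeff m * x ^ m)\<bar> \<le> inverse (fact 3) * \<bar>x\<bar> ^ 3"
    by (rule Maclaurin_sin_bound)
  moreover have "(\<Sum>m<3. sin_coeff m * x ^ m) = x"
    by (simp add: sin_coeff_def numeral_3_eq_3)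
  ultimately have "\<bar>sin x - x\<bar> \<le> x ^ 3 / 6"
    using assms by (simp add: fact_numeral)
  then have "x - sin x \<le> x ^ 3 / 6" by linarith
  moreover have "x ^ 3 \<le> 4 * x"
    using mult_right_mono[OF mult_mono[OF assms(2) assms(2)], of x] assms
    by (simp add: power3_eq_cube)
  ultimately show ?thesis by linarith
qed

lemma abs_le_abs_sin_pi:
  fixes t :: real
  assumes "\<bar>t\<bar> \<le> 1/2"
  shows "\<bar>t\<bar> \<le> \<bar>sin (pi * t)\<bar>"
proof -
  have "pi * \<bar>t\<bar> \<le> 4 * (1/2)"
    using mult_mono[OF less_imp_le[OF pi_less_4] assms] by simp
  then have "pi * \<bar>t\<bar> / 3 \<le> sin (pi * \<bar>t\<bar>)" by (intro third_le_sin) auto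
  moreover have "3 * \<bar>t\<bar> \<le> pi * \<bar>t\<bar>"
    using mult_right_mono[OF less_imp_le[OF pi_gt3]] by simp
  moreover have "\<bar>sin (pi * t)\<bar> = \<bar>sin (pi * \<bar>t\<bar>)\<bar>" by (cases "0 \<le> t") auto
  ultimately show ?thesis by linarith
qed

lemma neg_ln_abs_sin_pi_le:
  fixes t :: real
  assumes "\<bar>t\<bar> \<le> 1/2" and "exp (- a) \<le> 2 ^ m * (2 * pi) * \<bar>t\<bar>"
  shows "- ln \<bar>sin (pi * t)\<bar> \<le> a + real m * ln 2 + ln (2 * pi)"
proof -
  have "0 < \<bar>t\<bar>"
    using assms(2) exp_gt_zero[of "- a"] by (auto simp: zero_less_mult_iff)
  have "- a = ln (exp (- a))" by simp
  also have "\<dots> \<le> ln (2 ^ m * (2 * pi) * \<bar>t\<bar>)"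
    using assms(2) \<open>0 < \<bar>t\<bar>\<close> by (subst ln_le_cancel_iff) auto
  also have "\<dots> = real m * ln 2 + ln (2 * pi) + ln \<bar>t\<bar>"
    using \<open>0 < \<bar>t\<bar>\<close> by (simp add: ln_mult_pos ln_realpow)
  also have "\<dots> \<le> real m * ln 2 + ln (2 * pi) + ln \<bar>sin (pi * t)\<bar>"
    using abs_le_abs_sin_pi[OF assms(1)] \<open>0 < \<bar>t\<bar>\<close> by simp
  finally show ?thesis by simp
qed

section \<open>The doubling map and the potential\<close>

lemma funpow_doubling_eq: "\<exists>k::int. (doubling ^^ j) y = 2 ^ j * y - of_int k"
proof (induction j)
  case 0
  show ?case by (intro exI[of _ 0]) simp
next
  case (Suc j)
  then obtain k :: int where k: "(doubling ^^ j) y = 2 ^ j * y - of_int k" by blast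
  have "(doubling ^^ Suc j) y = 2 * (2 ^ j * y - of_int k) - of_int \<lfloor>2 * (2 ^ j * y - of_int k)\<rfloor>"
    by (simp add: k doubling_def frac_def)
  also have "\<dots> = 2 ^ Suc j * y - of_int (2 * k + \<lfloor>2 * (2 ^ j * y - of_int k)\<rfloor>)"
    by (simp add: algebra_simps)
  finally show ?case by blast
qed

lemma doubling_add_of_int: "doubling (y + of_int k) = doubling y"
  unfolding doubling_def using frac_add_of_int_right[of "2 * y" "2 * k"] by (simp add: algebra_simps)

lemma funpow_doubling_in_unit: "x \<in> {0..<1} \<Longrightarrow> (doubling ^^ n) x \<in> {0..<1}"
  by (cases n) (simp_all add: doubling_def frac_lt_1)

definition cos_abs :: "real \<Rightarrow> real \<Rightarrow> real" where
  "cos_abs c y = \<bar>cos (pi * (y + c))\<bar>"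

text \<open>Away from the zeros of \<^const>\<open>cos_abs\<close> this is \<open>-f\<^sub>c\<close>; at the zeros
  \<open>ln 0 = 0\<close> makes it \<open>0\<close> rather than \<open>\<infinity>\<close>.\<close>
definition neg_log_cos :: "real \<Rightarrow> real \<Rightarrow> real" where
  "neg_log_cos c y = - ln (cos_abs c y)"

text \<open>The truncation \<open>min (-f\<^sub>c) M\<close>, where \<open>-f\<^sub>c = \<infinity>\<close> at the zeros of \<^const>\<open>cos_abs\<close>.\<close>
definition neg_log_cos_trunc :: "real \<Rightarrow> real \<Rightarrow> real \<Rightarrow> real" where
  "neg_log_cos_trunc c M y = (if cos_abs c y = 0 then M else min (neg_log_cos c y) M)"

lemma fc_eq_neg_log_cos: "fc c y = (if cos_abs c y = 0 then -\<infinity> else ereal (- neg_log_cos c y))"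
  by (simp add: fc_def cos_abs_def neg_log_cos_def)

lemma cos_abs_nonneg: "0 \<le> cos_abs c y"
  by (simp add: cos_abs_def)

lemma neg_log_cos_nonneg: "0 \<le> neg_log_cos c y"
  by (cases "cos_abs c y = 0") (simp_all add: neg_log_cos_def cos_abs_def abs_cos_le_one)

lemma fc_nonpos: "fc c y \<le> 0"
  by (simp add: fc_eq_neg_log_cos neg_log_cos_nonneg)

lemma exp_neg_log_cos: "0 < cos_abs c y \<Longrightarrow> exp (- neg_log_cos c y) = cos_abs c y"
  by (simp add: neg_log_cos_def)

lemma neg_log_cos_trunc_le: "0 < cos_abs c y \<Longrightarrow> neg_log_cos_trunc c M y \<le> neg_log_cos c y"
  by (simp add: neg_log_cos_trunc_def)

lemma neg_log_cos_trunc_le_bound: "neg_log_cos_trunc c M y \<le> M"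
  by (simp add: neg_log_cos_trunc_def)

lemma neg_log_cos_trunc_nonneg: "0 \<le> M \<Longrightarrow> 0 \<le> neg_log_cos_trunc c M y"
  by (simp add: neg_log_cos_trunc_def neg_log_cos_nonneg)

lemma cos_abs_add_of_int: "cos_abs c (y + of_int k) = cos_abs c y"
  using abs_cos_add_int_times_pi[of "pi * (y + c)" k] by (simp add: cos_abs_def algebra_simps)

lemma cos_abs_bpt_add: "cos_abs c (bpt c + t) = \<bar>sin (pi * t)\<bar>"
proof -
  have "pi * (bpt c + t + c) = (pi / 2 + pi * t) + pi * of_int (- \<lfloor>1/2 - c\<rfloor>)"
    by (simp add: bpt_def frac_def algebra_simps)
  then have "cos_abs c (bpt c + t) = \<bar>cos (pi / 2 + pi * t)\<bar>"
    by (simp only: cos_abs_def abs_cos_add_int_times_pi)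
  then show ?thesis by (simp add: cos_add)
qed

lemma cos_abs_eq_0_imp_bpt_add_int:
  assumes "cos_abs c y = 0"
  shows "\<exists>k::int. y = bpt c + of_int k"
proof -
  have "sin ((y - bpt c) * pi) = 0"
    using assms cos_abs_bpt_add[of c "y - bpt c"] by (simp add: mult.commute)
  then obtain k :: int where "y - bpt c = of_int k"
    by (auto simp: sin_times_pi_eq_0 elim: Ints_cases)
  then show ?thesis by (intro exI[of _ k]) simp
qed

lemma doubling_eq_if_cos_abs_eq_0: "cos_abs c y = 0 \<Longrightarrow> doubling y = doubling (bpt c)"
  using cos_abs_eq_0_imp_bpt_add_int doubling_add_of_int by metis

lemma cos_abs_eq_0_in_unit: "cos_abs c y = 0 \<Longrightarrow> y \<in> {0..<1} \<Longrightarrow> y = bpt c"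
proof -
  assume "cos_abs c y = 0" "y \<in> {0..<1}"
  moreover obtain k :: int where "y = bpt c + of_int k"
    using cos_abs_eq_0_imp_bpt_add_int[OF \<open>cos_abs c y = 0\<close>] by blast
  moreover have "bpt c \<in> {0..<1}" by (simp add: bpt_def frac_lt_1)
  ultimately show "y = bpt c" by auto
qed

lemma cos_abs_funpow_doubling_le:
  "cos_abs c ((doubling ^^ j) z)
     \<le> cos_abs c ((doubling ^^ j) (z + t + of_int k)) + \<bar>sin (pi * (2 ^ j * t))\<bar>"
proof -
  obtain k1 k2 :: int where "(doubling ^^ j) (z + t + of_int k) = 2 ^ j * (z + t + of_int k) - of_int k1"
    and "(doubling ^^ j) z = 2 ^ j * z - of_int k2"
    using funpow_doubling_eq by metis
  then have "(doubling ^^ j) (z + t + of_int k) = ((doubling ^^ j) z + 2 ^ j * t) + of_int (2 ^ j * k - k1 + k2)"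
    by (simp add: algebra_simps)
  then have "cos_abs c ((doubling ^^ j) (z + t + of_int k))
      = \<bar>cos (pi * ((doubling ^^ j) z + c) + pi * (2 ^ j * t))\<bar>"
    by (simp only: cos_abs_add_of_int) (simp add: cos_abs_def algebra_simps)
  then show ?thesis
    using abs_cos_le_abs_cos_add_abs_sin[of "pi * ((doubling ^^ j) z + c)" "pi * (2 ^ j * t)"]
    by (simp add: cos_abs_def)
qed

lemma birkhoff_avg_eq:
  assumes "\<And>i. i < n \<Longrightarrow> 0 < cos_abs c ((doubling ^^ i) x)"
  shows "birkhoff_avg c x n = ereal (- (\<Sum>i<n. neg_log_cos c ((doubling ^^ i) x)) / real n)"
proof -
  have "(\<Sum>i<n. fc c ((doubling ^^ i) x)) = (\<Sum>i<n. ereal (- neg_log_cos c ((doubling ^^ i) x)))"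
    using assms by (intro sum.cong refl) (metis fc_eq_neg_log_cos less_irrefl lessThan_iff)
  then show ?thesis by (simp add: birkhoff_avg_def sum_negf)
qed

lemma birkhoff_avg_eq_MInf:
  assumes "cos_abs c ((doubling ^^ j) x) = 0" and "j < n"
  shows "birkhoff_avg c x n = -\<infinity>"
proof -
  have "(\<Sum>i<n. fc c ((doubling ^^ i) x)) \<le> 0" by (simp add: sum_nonpos fc_nonpos)
  moreover have "\<bar>\<Sum>i<n. fc c ((doubling ^^ i) x)\<bar> = \<infinity>"
    using assms by (auto simp: sum_Inf fc_eq_neg_log_cos intro!: bexI[of _ j])
  ultimately have "(\<Sum>i<n. fc c ((doubling ^^ i) x)) = -\<infinity>" by auto
  with \<open>j < n\<close> show ?thesis by (simp add: birkhoff_avg_def)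
qed

lemma e2ennreal_neg_fc_eq_SUP: "e2ennreal (- fc c y) = (SUP n. ennreal (neg_log_cos_trunc c (real n) y))"
proof (cases "cos_abs c y = 0")
  case True
  then show ?thesis
    by (simp add: fc_eq_neg_log_cos neg_log_cos_trunc_def ennreal_of_nat_eq_real_of_nat[symmetric]
        ennreal_SUP_of_nat_eq_top)
next
  case False
  obtain n where "neg_log_cos c y \<le> real n" using real_arch_simple by blast
  then have "(SUP n. ennreal (neg_log_cos_trunc c (real n) y)) = ennreal (neg_log_cos c y)"
    using False
    by (intro antisym SUP_least SUP_upper2[of n]) (auto simp: neg_log_cos_trunc_def intro: ennreal_leI)
  with False show ?thesis by (simp add: fc_eq_neg_log_cos)
qed

lemma incseq_neg_log_cos_trunc: "incseq (\<lambda>n y. ennreal (neg_log_cos_trunc c (real n) y))"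
  by (intro incseq_SucI le_funI ennreal_leI) (auto simp: neg_log_cos_trunc_def)

lemma neg_log_cos_trunc_measurable:
  assumes "sets \<mu> = sets (restrict_space borel {0..<1::real})"
  shows "neg_log_cos_trunc c M \<in> borel_measurable \<mu>"
proof -
  have "neg_log_cos_trunc c M \<in> borel_measurable borel"
    unfolding neg_log_cos_trunc_def neg_log_cos_def cos_abs_def by measurable
  then show ?thesis
    using measurable_restrict_space1 measurable_cong_sets[OF assms refl] by blast
qed

section \<open>Shadowing the critical orbit\<close>

definition block_rate :: "real \<Rightarrow> real" where
  "block_rate A = 2 * A + 2 * ln 2 + ln (2 * pi)"

locale tame_critical_orbit =
  fixes c A :: real
  assumes critical_orbit_pos: "\<And>i. 0 < cos_abs c ((doubling ^^ i) (doubling (bpt c)))"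
    and critical_orbit_sum:
      "\<And>n. (\<Sum>i<n. neg_log_cos c ((doubling ^^ i) (doubling (bpt c)))) \<le> A * real n"
begin

lemma A_nonneg: "0 \<le> A"
  using critical_orbit_sum[of 1] neg_log_cos_nonneg[of c "doubling (bpt c)"] by simp

lemma block_rate_ge: "A + ln 2 \<le> block_rate A" "0 < block_rate A"
proof -
  have "0 < ln (2 * pi)" using pi_gt3 by simp
  with A_nonneg ln_gt_zero[of 2] show "A + ln 2 \<le> block_rate A" "0 < block_rate A"
    unfolding block_rate_def by linarith+
qed

lemma critical_orbit_lower:
  "exp (- A * real (Suc j)) \<le> cos_abs c ((doubling ^^ j) (doubling (bpt c)))"
proof -
  have "neg_log_cos c ((doubling ^^ j) (doubling (bpt c)))
      \<le> (\<Sum>i<Suc j. neg_log_cos c ((doubling ^^ i) (doubling (bpt c))))"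
    by (rule member_le_sum) (simp_all add: neg_log_cos_nonneg)
  also have "\<dots> \<le> A * real (Suc j)" by (rule critical_orbit_sum)
  finally have "exp (- A * real (Suc j)) \<le> exp (- neg_log_cos c ((doubling ^^ j) (doubling (bpt c))))"
    by simp
  also have "\<dots> = cos_abs c ((doubling ^^ j) (doubling (bpt c)))"
    by (rule exp_neg_log_cos[OF critical_orbit_pos])
  finally show ?thesis .
qed

text \<open>With \<open>y = b + t\<close> (mod 1), the orbits of \<open>y\<close> and \<open>b\<close> differ by \<open>2\<^sup>i t\<close> after
  \<open>i\<close> steps, which perturbs the distance to \<open>b\<close> by at most \<open>\<pi> 2\<^sup>i |t|\<close>. The block ends at
  the first \<open>k\<close> where this error can exceed half the distance of the critical orbit to \<open>b\<close>,
  whose lower bound \<open>exp (-A (k + 1))\<close> then bounds \<open>|t|\<close> from below.\<close>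
lemma shadowing:
  assumes "0 < cos_abs c y"
  obtains k where
    "\<forall>i<k. cos_abs c ((doubling ^^ i) (doubling (bpt c))) < 2 * cos_abs c ((doubling ^^ i) (doubling y))"
    "neg_log_cos c y \<le> (A + ln 2) * real (Suc k) + ln (2 * pi)"
proof -
  define t where "t = (y - bpt c) - of_int (round (y - bpt c))"
  have y: "bpt c + t + of_int (round (y - bpt c)) = y" by (simp add: t_def)
  have "\<bar>t\<bar> \<le> 1/2"
    using of_int_round_abs_le[of "y - bpt c"] by (simp add: t_def abs_minus_commute)
  have "cos_abs c y = cos_abs c (bpt c + t)"
    using cos_abs_add_of_int[of c "bpt c + t" "round (y - bpt c)"] unfolding y .
  then have cos_y: "cos_abs c y = \<bar>sin (pi * t)\<bar>" by (simp add: cos_abs_bpt_add)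
  with assms have "0 < \<bar>t\<bar>" by auto
  define d where "d j = cos_abs c ((doubling ^^ j) (doubling (bpt c)))" for j
  obtain k where k: "d k \<le> 2 ^ k * (4 * pi * \<bar>t\<bar>)"
    and before: "\<And>i. i < k \<Longrightarrow> 2 ^ i * (4 * pi * \<bar>t\<bar>) < d i"
    using ex_least_le_geometric[of "4 * pi * \<bar>t\<bar>" d 1] \<open>0 < \<bar>t\<bar>\<close>
    by (auto simp: d_def cos_abs_def abs_cos_le_one)
  have near: "d i \<le> cos_abs c ((doubling ^^ i) (doubling y)) + 2 ^ i * (2 * pi * \<bar>t\<bar>)" for i
  proof -
    have "d i \<le> cos_abs c ((doubling ^^ i) (doubling y)) + \<bar>sin (pi * (2 ^ Suc i * t))\<bar>"
      using cos_abs_funpow_doubling_le[of c "Suc i" "bpt c" t "round (y - bpt c)"]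
      unfolding y d_def funpow_Suc_right comp_apply .
    moreover have "\<bar>sin (pi * (2 ^ Suc i * t))\<bar> \<le> 2 ^ i * (2 * pi * \<bar>t\<bar>)"
      using abs_sin_x_le_abs_x[of "pi * (2 ^ Suc i * t)"] by (simp add: abs_mult mult_ac)
    ultimately show ?thesis by linarith
  qed
  show ?thesis
  proof
    show "\<forall>i<k. cos_abs c ((doubling ^^ i) (doubling (bpt c))) < 2 * cos_abs c ((doubling ^^ i) (doubling y))"
    proof (intro allI impI)
      fix i assume "i < k"
      with before[of i] near[of i]
      show "cos_abs c ((doubling ^^ i) (doubling (bpt c))) < 2 * cos_abs c ((doubling ^^ i) (doubling y))"
        unfolding d_def by simp
    qed
  next
    have "exp (- (A * real (Suc k))) \<le> 2 ^ Suc k * (2 * pi) * \<bar>t\<bar>"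
      using critical_orbit_lower[of k] k by (simp add: d_def)
    from neg_ln_abs_sin_pi_le[OF \<open>\<bar>t\<bar> \<le> 1/2\<close> this]
    show "neg_log_cos c y \<le> (A + ln 2) * real (Suc k) + ln (2 * pi)"
      by (simp add: neg_log_cos_def cos_y algebra_simps del: of_nat_Suc)
  qed
qed

lemma neg_log_cos_block:
  assumes "0 < cos_abs c y"
  obtains k where
    "\<forall>i<k. 0 < cos_abs c ((doubling ^^ i) (doubling y))"
    "\<forall>r\<le>k. (\<Sum>i<r. neg_log_cos c ((doubling ^^ i) (doubling y))) \<le> (A + ln 2) * real r"
    "(\<Sum>i<Suc k. neg_log_cos c ((doubling ^^ i) y)) \<le> block_rate A * real (Suc k)"
proof -
  obtain k where shadow_all: "\<forall>i<k.
       cos_abs c ((doubling ^^ i) (doubling (bpt c))) < 2 * cos_abs c ((doubling ^^ i) (doubling y))"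
    and first: "neg_log_cos c y \<le> (A + ln 2) * real (Suc k) + ln (2 * pi)"
    using assms by (rule shadowing)
  note shadow = shadow_all[rule_format]
  have pos: "0 < cos_abs c ((doubling ^^ i) (doubling y))" if "i < k" for i
    using shadow[OF that] critical_orbit_pos[of i] by linarith
  have step: "neg_log_cos c ((doubling ^^ i) (doubling y))
      \<le> neg_log_cos c ((doubling ^^ i) (doubling (bpt c))) + ln 2" if "i < k" for i
  proof -
    have "ln (cos_abs c ((doubling ^^ i) (doubling (bpt c))) / 2) \<le> ln (cos_abs c ((doubling ^^ i) (doubling y)))"
      using shadow[OF that] critical_orbit_pos[of i] by (subst ln_le_cancel_iff) auto
    then show ?thesis using critical_orbit_pos[of i] by (simp add: neg_log_cos_def ln_div)
  qed
  have partial: "(\<Sum>i<r. neg_log_cos c ((doubling ^^ i) (doubling y))) \<le> (A + ln 2) * real r"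
    if "r \<le> k" for r
  proof -
    have "(\<Sum>i<r. neg_log_cos c ((doubling ^^ i) (doubling y)))
        \<le> (\<Sum>i<r. neg_log_cos c ((doubling ^^ i) (doubling (bpt c))) + ln 2)"
      using step that by (intro sum_mono) auto
    also have "\<dots> \<le> A * real r + real r * ln 2"
      using critical_orbit_sum[of r] by (simp add: sum.distrib)
    finally show ?thesis by (simp add: algebra_simps)
  qed
  have "(\<Sum>i<Suc k. neg_log_cos c ((doubling ^^ i) y))
      = neg_log_cos c y + (\<Sum>i<k. neg_log_cos c ((doubling ^^ i) (doubling y)))"
    by (rule birkhoff_sum_Suc)
  also have "\<dots> \<le> ((A + ln 2) * real (Suc k) + ln (2 * pi)) + (A + ln 2) * real k"
    using first partial[of k] by simp
  also have "\<dots> \<le> block_rate A * real (Suc k)"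
    using A_nonneg ln_gt_zero[of 2] ln_gt_zero[of "2 * pi"] pi_gt3
    by (simp add: block_rate_def algebra_simps)
  finally show ?thesis using pos partial by (intro that) auto
qed

lemma birkhoff_sum_trunc_le_regular:
  assumes "0 \<le> M" and "\<And>i. i < n \<Longrightarrow> 0 < cos_abs c ((doubling ^^ i) y)"
  shows "(\<Sum>i<n. neg_log_cos_trunc c M ((doubling ^^ i) y)) \<le> block_rate A * real n + M"
proof (rule birkhoff_sum_le_by_blocks[where P = "\<lambda>y. 0 < cos_abs c y", OF \<open>0 \<le> M\<close> _ assms(2)])
  fix z assume "0 < cos_abs c z"
  then obtain k where pos: "\<forall>i<k. 0 < cos_abs c ((doubling ^^ i) (doubling z))"
    and partial: "\<forall>r\<le>k. (\<Sum>i<r. neg_log_cos c ((doubling ^^ i) (doubling z))) \<le> (A + ln 2) * real r"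
    and full: "(\<Sum>i<Suc k. neg_log_cos c ((doubling ^^ i) z)) \<le> block_rate A * real (Suc k)"
    by (rule neg_log_cos_block)
  have trunc_le: "(\<Sum>i<r. neg_log_cos_trunc c M ((doubling ^^ i) (doubling z)))
      \<le> (\<Sum>i<r. neg_log_cos c ((doubling ^^ i) (doubling z)))" if "r \<le> k" for r
    using pos that by (intro sum_mono neg_log_cos_trunc_le) auto
  have "(\<Sum>i<Suc k. neg_log_cos_trunc c M ((doubling ^^ i) z)) \<le> block_rate A * real (Suc k)"
    using full trunc_le[of k] neg_log_cos_trunc_le[OF \<open>0 < cos_abs c z\<close>, of M]
    unfolding birkhoff_sum_Suc by linarith
  moreover have "(\<Sum>i<r. neg_log_cos_trunc c M ((doubling ^^ i) z)) \<le> block_rate A * real r + M"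
    if "r \<le> Suc k" for r
  proof (cases r)
    case (Suc r')
    have "(A + ln 2) * real r' \<le> block_rate A * real r"
      using block_rate_ge A_nonneg Suc by (intro mult_mono) auto
    moreover have "r' \<le> k" using that Suc by simp
    ultimately show ?thesis
      using partial[rule_format, of r'] trunc_le[of r'] neg_log_cos_trunc_le_bound[of c M z]
      unfolding Suc birkhoff_sum_Suc by linarith
  qed (simp add: \<open>0 \<le> M\<close>)
  ultimately show "\<exists>m\<ge>1. (\<Sum>i<m. neg_log_cos_trunc c M ((doubling ^^ i) z)) \<le> block_rate A * real m \<and>
      (\<forall>r\<le>m. (\<Sum>i<r. neg_log_cos_trunc c M ((doubling ^^ i) z)) \<le> block_rate A * real r + M)"
    by (intro exI[of _ "Suc k"]) auto
qed

text \<open>An orbit meets \<open>b\<close> at most once, since the orbit of \<open>T b\<close> never returns to \<open>b\<close>;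
  the three terms \<open>M\<close> pay for the incomplete block before the hit, the hit itself, and the
  incomplete block at the end.\<close>
lemma birkhoff_sum_trunc_le:
  assumes "0 \<le> M"
  shows "(\<Sum>i<n. neg_log_cos_trunc c M ((doubling ^^ i) y)) \<le> block_rate A * real n + 3 * M"
proof (cases "\<forall>i<n. 0 < cos_abs c ((doubling ^^ i) y)")
  case True
  then have "(\<Sum>i<n. neg_log_cos_trunc c M ((doubling ^^ i) y)) \<le> block_rate A * real n + M"
    by (intro birkhoff_sum_trunc_le_regular[OF assms]) auto
  with assms show ?thesis by linarith
next
  case False
  then obtain i where "i < n" "cos_abs c ((doubling ^^ i) y) = 0"
    using cos_abs_nonneg by (auto simp: less_le)
  then obtain p where "p \<le> i" and hit: "cos_abs c ((doubling ^^ p) y) = 0"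
    and before': "\<forall>j<p. cos_abs c ((doubling ^^ j) y) \<noteq> 0"
    using ex_least_nat_le[of "\<lambda>j. cos_abs c ((doubling ^^ j) y) = 0" i] by auto
  with \<open>i < n\<close> have "p < n" by simp
  have before: "0 < cos_abs c ((doubling ^^ j) y)" if "j < p" for j
    using before' that cos_abs_nonneg by (simp add: less_le)
  define k where "k = n - Suc p"
  have n: "n = p + Suc k" using \<open>p < n\<close> by (simp add: k_def)
  let ?h = "neg_log_cos_trunc c M"
  have "(\<Sum>i<n. ?h ((doubling ^^ i) y))
      = (\<Sum>i<p. ?h ((doubling ^^ i) y)) + (?h ((doubling ^^ p) y) + (\<Sum>i<k. ?h ((doubling ^^ i) (doubling (bpt c)))))"
    unfolding n birkhoff_sum_add birkhoff_sum_Suc doubling_eq_if_cos_abs_eq_0[OF hit] ..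
  also have "\<dots> \<le> (block_rate A * real p + M) + (M + (block_rate A * real k + M))"
    using birkhoff_sum_trunc_le_regular[OF assms before] neg_log_cos_trunc_le_bound
      birkhoff_sum_trunc_le_regular[OF assms critical_orbit_pos]
    by (intro add_mono) auto
  also have "\<dots> \<le> block_rate A * real n + 3 * M"
    using block_rate_ge(2) by (simp add: n algebra_simps)
  finally show ?thesis .
qed

lemma chi_plus_ge:
  assumes "x \<in> {0..<1}" and "\<And>n. (doubling ^^ n) x \<noteq> bpt c"
  shows "- ereal (block_rate A) \<le> chi_plus c x"
proof -
  have pos: "0 < cos_abs c ((doubling ^^ i) x)" for i
  proof -
    have "cos_abs c ((doubling ^^ i) x) \<noteq> 0"
      using cos_abs_eq_0_in_unit[OF _ funpow_doubling_in_unit[OF assms(1)]] assms(2) by blast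
    with cos_abs_nonneg show ?thesis by (simp add: less_le)
  qed
  have "\<exists>\<^sub>F n in sequentially. (\<Sum>i<n. neg_log_cos c ((doubling ^^ i) x)) \<le> block_rate A * real n"
  proof (rule frequently_birkhoff_sum_le_by_blocks[where P = "\<lambda>y. 0 < cos_abs c y"])
    fix y assume "0 < cos_abs c y"
    then obtain k where "(\<Sum>i<Suc k. neg_log_cos c ((doubling ^^ i) y)) \<le> block_rate A * real (Suc k)"
      by (rule neg_log_cos_block)
    then show "\<exists>m\<ge>1. (\<Sum>i<m. neg_log_cos c ((doubling ^^ i) y)) \<le> block_rate A * real m"
      by (intro exI[of _ "Suc k"]) auto
  qed (rule pos)
  then have "\<exists>\<^sub>F n in sequentially. - ereal (block_rate A) \<le> birkhoff_avg c x n"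
  proof (rule frequently_elim1)
    fix n assume le: "(\<Sum>i<n. neg_log_cos c ((doubling ^^ i) x)) \<le> block_rate A * real n"
    show "- ereal (block_rate A) \<le> birkhoff_avg c x n"
    proof (cases "n = 0")
      case True
      with block_rate_ge(2) show ?thesis by (simp add: birkhoff_avg_def)
    next
      case False
      with le have "- block_rate A \<le> - (\<Sum>i<n. neg_log_cos c ((doubling ^^ i) x)) / real n"
        by (simp add: field_simps)
      then show ?thesis by (simp add: birkhoff_avg_eq pos)
    qed
  qed
  then show ?thesis unfolding chi_plus_def by (rule le_Limsup_if_frequently)
qed

lemma nn_integral_neg_fc_le:
  assumes "\<mu> \<in> invariant_measures"
  shows "(\<integral>\<^sup>+y. e2ennreal (- fc c y) \<partial>\<mu>) \<le> ennreal (block_rate A)"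
proof -
  have sets: "sets \<mu> = sets (restrict_space borel {0..<1})" and "prob_space \<mu>"
    and T: "doubling \<in> \<mu> \<rightarrow>\<^sub>M \<mu>" and inv: "distr \<mu> \<mu> doubling = \<mu>"
    using assms by (auto simp: invariant_measures_def)
  note trunc_meas = neg_log_cos_trunc_measurable[OF sets]
  have "(\<integral>\<^sup>+y. e2ennreal (- fc c y) \<partial>\<mu>) = (SUP n. \<integral>\<^sup>+y. ennreal (neg_log_cos_trunc c (real n) y) \<partial>\<mu>)"
    unfolding e2ennreal_neg_fc_eq_SUP
    using incseq_neg_log_cos_trunc trunc_meas by (intro nn_integral_monotone_convergence_SUP) auto
  also have "\<dots> \<le> ennreal (block_rate A)"
  proof (rule SUP_least)
    fix n :: nat
    have "0 \<le> real n" by simp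
    show "(\<integral>\<^sup>+y. ennreal (neg_log_cos_trunc c (real n) y) \<partial>\<mu>) \<le> ennreal (block_rate A)"
      using nn_integral_le_if_birkhoff_sum_le[OF \<open>prob_space \<mu>\<close> T inv trunc_meas
          neg_log_cos_trunc_nonneg[OF \<open>0 \<le> real n\<close>] birkhoff_sum_trunc_le[OF \<open>0 \<le> real n\<close>]] .
  qed
  finally show ?thesis .
qed

lemma alpha_ge: "- ereal (block_rate A) \<le> alpha c"
  unfolding alpha_def int_fc_def
proof (rule INF_greatest)
  fix \<mu> assume "\<mu> \<in> invariant_measures"
  then have "enn2ereal (\<integral>\<^sup>+y. e2ennreal (- fc c y) \<partial>\<mu>) \<le> ereal (block_rate A)"
    using nn_integral_neg_fc_le block_rate_ge(2)
    by (metis enn2ereal_ennreal less_eq_ennreal.rep_eq less_imp_le)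
  then show "- ereal (block_rate A) \<le> - enn2ereal (\<integral>\<^sup>+y. e2ennreal (- fc c y) \<partial>\<mu>)"
    by (simp only: ereal_minus_le_minus)
qed

end

lemma tame_critical_orbit_if_chi_minus:
  assumes "-\<infinity> < chi_minus c (doubling (bpt c))"
  obtains A where "tame_critical_orbit c A"
proof -
  define z where "z = doubling (bpt c)"
  define S where "S n = (\<Sum>i<n. neg_log_cos c ((doubling ^^ i) z))" for n
  have finite_avg: "\<forall>\<^sub>F n in sequentially. -\<infinity> < birkhoff_avg c z n"
    using assms less_LiminfD unfolding chi_minus_def z_def by blast
  have pos: "0 < cos_abs c ((doubling ^^ j) z)" for j
  proof (rule ccontr)
    assume "\<not> 0 < cos_abs c ((doubling ^^ j) z)"
    then have "cos_abs c ((doubling ^^ j) z) = 0"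
      using cos_abs_nonneg[of c "(doubling ^^ j) z"] by simp
    then have "\<forall>\<^sub>F n in sequentially. birkhoff_avg c z n = -\<infinity>"
      unfolding eventually_sequentially by (intro exI[of _ "Suc j"] allI impI birkhoff_avg_eq_MInf) auto
    with finite_avg have "\<forall>\<^sub>F n in sequentially. False"
      by (rule eventually_elim2) simp
    then show False by simp
  qed
  have "birkhoff_avg c z = (\<lambda>n. - ereal (S n / real n))"
    using pos by (simp add: birkhoff_avg_eq S_def fun_eq_iff)
  then have "chi_minus c z = - limsup (\<lambda>n. ereal (S n / real n))"
    using ereal_Liminf_uminus[of sequentially "\<lambda>n. ereal (S n / real n)"] by (simp add: chi_minus_def)
  with assms have "limsup (\<lambda>n. ereal (S n / real n)) < \<infinity>"
    by (simp add: z_def)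
  then obtain A where A: "\<forall>n. S n \<le> A * real n"
    unfolding S_def by (rule sum_le_linear_if_limsup_average_finite[OF neg_log_cos_nonneg])
  have "tame_critical_orbit c A"
    by unfold_locales (use pos A in \<open>simp_all add: z_def S_def\<close>)
  then show thesis by (rule that)
qed

theorem proposition2p3:
  fixes c :: real
  assumes "0 \<le> c" and "c < 1"
    and "chi_minus c (doubling (bpt c)) > -\<infinity>"
  shows "\<exists>K::real. K > 0 \<and>
     (\<forall>x\<in>{0..<1}. (\<exists>n. (doubling ^^ n) x = bpt c) \<or> chi_plus c x > - ereal K) \<and>
     alpha c \<ge> - ereal K"
proof -
  obtain A where "tame_critical_orbit c A"
    using assms(3) by (rule tame_critical_orbit_if_chi_minus)
  then interpret tame_critical_orbit c A .
  have "- ereal (block_rate A + 1) < - ereal (block_rate A)" by simp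
  then have "\<forall>x\<in>{0..<1}. (\<exists>n. (doubling ^^ n) x = bpt c) \<or> chi_plus c x > - ereal (block_rate A + 1)"
    using chi_plus_ge less_le_trans by blast
  moreover have "alpha c \<ge> - ereal (block_rate A + 1)"
    using alpha_ge by (simp add: order_trans[rotated])
  ultimately show ?thesis
    using block_rate_ge(2) by (intro exI[of _ "block_rate A + 1"]) auto
qed

end
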